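(* Let $n \geq 3$ and $m \geq 1$ be integers, let $\lambda_0 \geq 0 > \lambda_1 \geq \lambda_2 \geq \cdots \geq \lambda_n$ be real numbers, and let $z_1, \ldots, z_m$ be complex numbers with $z_j = a_j + b_j i$, where $a_j \in \mathbb{R}$ and $b_j > 0$ for $j = 1, \ldots, m$. If $$\lambda_0 + \sum_{j=1}^n \lambda_j - 2\sum_{j=1}^m |z_j| \geq 0,$$ then there is an $(n+2m+1) \times (n+2m+1)$ normal centrosymmetric nonnegative matrix whose eigenvalues are $\lambda_0, \lambda_1, \ldots, \lambda_n, z_1, \ldots, z_m, \overline{z}_1, \ldots, \overline{z}_m$.
   Context: A real square matrix is nonnegative if all its entries are nonnegative. For each size $k$, $J$ denotes the $k \times k$ reverse identity matrix (ones on the anti-diagonal, zeros elsewhere). A $k \times k$ matrix $A$ is centrosymmetric if $JAJ = A$. A matrix $A$ is normal if $AA^* = A^*A$. *)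

theory Defs
  imports "Jordan_Normal_Form.Matrix" "Jordan_Normal_Form.Char_Poly"
begin

definition rev_id_mat :: "nat \<Rightarrow> 'a :: {zero,one} mat" where
  "rev_id_mat k = mat k k (\<lambda>(i, j). if i + j = k - 1 then 1 else 0)"

definition centrosymmetric :: "'a :: comm_ring_1 mat \<Rightarrow> bool" where
  "centrosymmetric A \<longleftrightarrow> A \<in> carrier_mat (dim_row A) (dim_row A) \<and>
     rev_id_mat (dim_row A) * A * rev_id_mat (dim_row A) = A"

definition conj_transpose_mat :: "complex mat \<Rightarrow> complex mat" where
  "conj_transpose_mat A = transpose_mat (map_mat cnj A)"

definition normal_mat :: "complex mat \<Rightarrow> bool" where
  "normal_mat A \<longleftrightarrow> A * conj_transpose_mat A = conj_transpose_mat A * A"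

definition nonneg_mat :: "real mat \<Rightarrow> bool" where
  "nonneg_mat A \<longleftrightarrow> (\<forall>i < dim_row A. \<forall>j < dim_col A. A $$ (i, j) \<ge> 0)"

definition has_eigenvalues :: "complex mat \<Rightarrow> complex list \<Rightarrow> bool" where
  "has_eigenvalues A es \<longleftrightarrow> char_poly A = (\<Prod>e \<leftarrow> es. [:- e, 1:])"

end

(* A real matrix M is carried together with an orthonormal eigenbasis whose first vector is a
   nonnegative symmetric Perron vector u for an eigenvalue beta >= 0.  Such an M is unitarily
   diagonalisable, hence normal, and its characteristic polynomial is read off the eigenbasis.

   Base: for d_0 = beta, d_1, ..., d_(2K-1) with d_(2K-s) = cnj d_s and sum |d_s| <= beta, the
   matrix Q diag(d) Q^* built from (permuted) Fourier vectors is real, nonnegative and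
   centrosymmetric.  With K = m + 1 it realises beta, lam_1, the z_j and their conjugates.

   Gluing (Fiedler): if B and C have Perron pairs (beta, u) and (gamma, v) and mu < 0, then
   [[B, rho u v^T], [rho v u^T, C]] with rho^2 = (beta - mu) (gamma - mu) keeps all other
   eigenvalues of B and C and replaces beta, gamma by beta + gamma - mu and mu.  Inserting C in
   the middle of B keeps the result centrosymmetric.  Gluing the blocks [[0, -lam_j], [-lam_j, 0]]
   with mu = lam_(j+1), and a last 1 x 1 zero block when needed, adds lam_2, ..., lam_n and
   lowers the Perron root from lam_0 + lam_2 + ... + lam_n to lam_0. *)

theory Submission
  imports Defs
begin

section \<open>Orthonormal eigenbases and normality\<close>

definition cinner :: "nat \<Rightarrow> (nat \<Rightarrow> complex) \<Rightarrow> (nat \<Rightarrow> complex) \<Rightarrow> complex" where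
  "cinner N x y = (\<Sum>i<N. cnj (x i) * y i)"

definition orthonormal :: "nat \<Rightarrow> (nat \<Rightarrow> complex) list \<Rightarrow> bool" where
  "orthonormal N vs \<longleftrightarrow> (\<forall>v\<in>set vs. cinner N v v = 1) \<and> sorted_wrt (\<lambda>v w. cinner N v w = 0) vs"

lemma cinner_commute: "cinner N y x = cnj (cinner N x y)"
  unfolding cinner_def by (simp add: cnj_sum mult.commute)

lemma orthonormal_Cons:
  "orthonormal N (v # vs) \<longleftrightarrow> cinner N v v = 1 \<and> (\<forall>w\<in>set vs. cinner N v w = 0) \<and> orthonormal N vs"
  unfolding orthonormal_def by auto

lemma orthonormal_nth:
  assumes "orthonormal N vs" "k < length vs" "l < length vs"
  shows "cinner N (vs ! k) (vs ! l) = (if k = l then 1 else 0)"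
proof -
  have "cinner N (vs ! k) (vs ! l) = 0" if "k < l" "l < length vs" for k l
    using assms(1) that unfolding orthonormal_def sorted_wrt_iff_nth_less by auto
  moreover have "cinner N (vs ! k) (vs ! k) = 1"
    using assms(1,2) unfolding orthonormal_def by auto
  ultimately show ?thesis
    using assms(2,3) cinner_commute[of N "vs ! k" "vs ! l"] by (cases k l rule: linorder_cases) auto
qed

lemma cinner_zero [simp]: "cinner N (\<lambda>_. 0) w = 0" "cinner N w (\<lambda>_. 0) = 0"
  unfolding cinner_def by simp_all

lemma cinner_scale [simp]:
  "cinner N (\<lambda>k. s * w k) w' = cnj s * cinner N w w'" "cinner N w (\<lambda>k. s * w' k) = s * cinner N w w'"
  unfolding cinner_def by (simp_all add: sum_distrib_left mult_ac)

lemma cinner_uminus [simp]: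
  "cinner N (\<lambda>k. - w k) w' = - cinner N w w'" "cinner N w (\<lambda>k. - w' k) = - cinner N w w'"
  unfolding cinner_def by (simp_all add: sum_negf)

lemma cinner_of_real:
  "cinner N (\<lambda>k. complex_of_real (x k)) (\<lambda>k. complex_of_real (y k)) = complex_of_real (\<Sum>k<N. x k * y k)"
  unfolding cinner_def by simp

lemma conj_transpose_carrier [simp]:
  "X \<in> carrier_mat a b \<Longrightarrow> conj_transpose_mat X \<in> carrier_mat b a"
  unfolding conj_transpose_mat_def by auto

lemma conj_transpose_conj_transpose [simp]: "conj_transpose_mat (conj_transpose_mat X) = X"
  unfolding conj_transpose_mat_def by (intro eq_matI) auto

lemma conj_transpose_mult:
  assumes "X \<in> carrier_mat a b" "Y \<in> carrier_mat b c"
  shows "conj_transpose_mat (X * Y) = conj_transpose_mat Y * conj_transpose_mat X"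
  using assms unfolding conj_transpose_mat_def
  by (intro eq_matI) (auto simp: scalar_prod_def cnj_sum mult.commute)

lemma conj_transpose_mat_diag: "conj_transpose_mat (mat_diag N f) = mat_diag N (\<lambda>i. cnj (f i))"
  unfolding conj_transpose_mat_def mat_diag_def by (intro eq_matI) auto

lemma unitary_conj_mult:
  assumes Q: "Q \<in> carrier_mat N N" and X: "X \<in> carrier_mat N N" and Y: "Y \<in> carrier_mat N N"
    and QQ: "conj_transpose_mat Q * Q = 1\<^sub>m N"
  shows "(Q * X * conj_transpose_mat Q) * (Q * Y * conj_transpose_mat Q) = Q * (X * Y) * conj_transpose_mat Q"
proof -
  let ?Qh = "conj_transpose_mat Q"
  have Qh: "?Qh \<in> carrier_mat N N" using Q by simp
  have "?Qh * (Q * Y * ?Qh) = (?Qh * Q) * (Y * ?Qh)"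
    using assoc_mult_mat[OF Q Y Qh] assoc_mult_mat[OF Qh Q mult_carrier_mat[OF Y Qh]] by simp
  also have "\<dots> = Y * ?Qh" unfolding QQ using Y Qh by simp
  finally have cancel: "?Qh * (Q * Y * ?Qh) = Y * ?Qh" .
  have "(Q * X * ?Qh) * (Q * Y * ?Qh) = Q * X * (?Qh * (Q * Y * ?Qh))"
    by (rule assoc_mult_mat) (use Q X Y Qh in auto)
  also have "\<dots> = Q * (X * (Y * ?Qh))"
    unfolding cancel by (rule assoc_mult_mat) (use Q X Y Qh in auto)
  also have "\<dots> = Q * (X * Y) * ?Qh"
    using assoc_mult_mat[OF X Y Qh] assoc_mult_mat[OF Q mult_carrier_mat[OF X Y] Qh] by simp
  finally show ?thesis .
qed

lemma normal_mat_unitary_diag: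
  assumes Q: "Q \<in> carrier_mat N N" and QQ: "conj_transpose_mat Q * Q = 1\<^sub>m N"
  shows "normal_mat (Q * mat_diag N f * conj_transpose_mat Q)"
proof -
  let ?D = "mat_diag N f" and ?Dh = "mat_diag N (\<lambda>i. cnj (f i))"
  have "conj_transpose_mat (Q * ?D * conj_transpose_mat Q)
      = conj_transpose_mat (conj_transpose_mat Q) * conj_transpose_mat (Q * ?D)"
    by (rule conj_transpose_mult[of _ N N _ N]) (use Q in auto)
  also have "conj_transpose_mat (Q * ?D) = ?Dh * conj_transpose_mat Q"
    using Q by (simp add: conj_transpose_mult[of _ N N _ N] conj_transpose_mat_diag)
  finally have adj: "conj_transpose_mat (Q * ?D * conj_transpose_mat Q) = Q * ?Dh * conj_transpose_mat Q"
    using Q by (simp add: assoc_mult_mat[symmetric, of Q N N ?Dh N "conj_transpose_mat Q" N])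
  have "?D * ?Dh = ?Dh * ?D" by (simp add: mult.commute)
  then show ?thesis
    unfolding normal_mat_def adj using Q QQ by (simp add: unitary_conj_mult)
qed

lemma normal_eigenvalues_of_orthonormal_eigenvectors:
  fixes A :: "complex mat"
  assumes A: "A \<in> carrier_mat N N" and len: "length es = N" "length vs = N"
    and on: "orthonormal N vs"
    and eig: "\<And>k i. k < N \<Longrightarrow> i < N \<Longrightarrow> (\<Sum>j<N. A $$ (i, j) * (vs ! k) j) = es ! k * (vs ! k) i"
  shows "normal_mat A \<and> has_eigenvalues A es"
proof -
  define Q where "Q = mat N N (\<lambda>(i, k). (vs ! k) i)"
  define D where "D = mat_diag N (\<lambda>k. es ! k)"
  let ?Qh = "conj_transpose_mat Q"
  have Q: "Q \<in> carrier_mat N N" and Qh: "?Qh \<in> carrier_mat N N" and D: "D \<in> carrier_mat N N"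
    unfolding Q_def D_def by auto
  have QhQ: "?Qh * Q = 1\<^sub>m N"
    using len on by (intro eq_matI)
      (auto simp: Q_def conj_transpose_mat_def scalar_prod_def cinner_def atLeast0LessThan
        orthonormal_nth[symmetric])
  have QQh: "Q * ?Qh = 1\<^sub>m N" by (rule mat_mult_left_right_inverse[OF Qh Q QhQ])
  have AQ: "A * Q = Q * D"
    using A eig unfolding D_def
    by (subst mat_diag_mult_right[OF Q], intro eq_matI)
      (auto simp: Q_def scalar_prod_def atLeast0LessThan mult.commute)
  have A_eq: "A = Q * D * ?Qh"
  proof -
    have "A = A * (Q * ?Qh)" using QQh A by simp
    also have "\<dots> = Q * D * ?Qh" using A Q Qh by (simp flip: AQ assoc_mult_mat[of _ N N _ N _ N])
    finally show ?thesis .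
  qed
  have "{A, D, Q, ?Qh} \<subseteq> carrier_mat N N" using A D Q Qh by auto
  then have "similar_mat A D" using QQh QhQ A_eq by (rule similar_matI)
  moreover have "diag_mat D = es"
    using len unfolding D_def mat_diag_def diag_mat_def by (auto intro: nth_equalityI)
  moreover have "upper_triangular D" unfolding D_def mat_diag_def upper_triangular_def by auto
  ultimately have "char_poly A = (\<Prod>e\<leftarrow>es. [:- e, 1:])"
    using char_poly_similar char_poly_upper_triangular[OF D] by metis
  then show ?thesis
    unfolding has_eigenvalues_def A_eq[symmetric] using normal_mat_unitary_diag[OF Q QhQ] A_eq
    unfolding D_def by simp
qed

section \<open>Centrosymmetric matrices with a Perron eigenbasis\<close>

lemma sum_rev_delta:
  assumes "i < (N::nat)"
  shows "(\<Sum>k<N. if i + k = N - 1 then f k else 0) = f (N - 1 - i)"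
proof -
  have "(\<Sum>k<N. if i + k = N - 1 then f k else 0) = (\<Sum>k<N. if k = N - 1 - i then f k else 0)"
    using assms by (intro sum.cong) auto
  also have "\<dots> = f (N - 1 - i)" using assms by (simp add: sum.delta')
  finally show ?thesis .
qed

lemma rev_id_mat_mult:
  assumes X: "(X :: 'a :: comm_ring_1 mat) \<in> carrier_mat N c"
  shows "rev_id_mat N * X = mat N c (\<lambda>(i, j). X $$ (N - 1 - i, j))"
proof (rule eq_matI)
  fix i j assume "i < dim_row (mat N c (\<lambda>(i, j). X $$ (N - 1 - i, j)))"
    "j < dim_col (mat N c (\<lambda>(i, j). X $$ (N - 1 - i, j)))"
  then have ij: "i < N" "j < c" by auto
  then have "(rev_id_mat N * X) $$ (i, j) = (\<Sum>k<N. if i + k = N - 1 then X $$ (k, j) else 0)"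
    using X unfolding rev_id_mat_def by (auto simp: scalar_prod_def lessThan_atLeast0 intro!: sum.cong)
  then show "(rev_id_mat N * X) $$ (i, j) = mat N c (\<lambda>(i, j). X $$ (N - 1 - i, j)) $$ (i, j)"
    using ij sum_rev_delta by simp
qed (use X in \<open>auto simp: rev_id_mat_def\<close>)

lemma mult_rev_id_mat:
  assumes X: "(X :: 'a :: comm_ring_1 mat) \<in> carrier_mat r N"
  shows "X * rev_id_mat N = mat r N (\<lambda>(i, j). X $$ (i, N - 1 - j))"
proof (rule eq_matI)
  fix i j assume "i < dim_row (mat r N (\<lambda>(i, j). X $$ (i, N - 1 - j)))"
    "j < dim_col (mat r N (\<lambda>(i, j). X $$ (i, N - 1 - j)))"
  then have ij: "i < r" "j < N" by auto
  then have "(X * rev_id_mat N) $$ (i, j) = (\<Sum>k<N. if j + k = N - 1 then X $$ (i, k) else 0)"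
    using X unfolding rev_id_mat_def
    by (auto simp: scalar_prod_def lessThan_atLeast0 add.commute intro!: sum.cong)
  then show "(X * rev_id_mat N) $$ (i, j) = mat r N (\<lambda>(i, j). X $$ (i, N - 1 - j)) $$ (i, j)"
    using ij sum_rev_delta by simp
qed (use X in \<open>auto simp: rev_id_mat_def\<close>)

lemma centrosymmetric_mat:
  assumes "\<And>i j. i < N \<Longrightarrow> j < N \<Longrightarrow> f (N - 1 - i) (N - 1 - j) = f i j"
  shows "centrosymmetric (mat N N (\<lambda>(i, j). f i j) :: 'a :: comm_ring_1 mat)"
proof -
  let ?A = "mat N N (\<lambda>(i, j). f i j) :: 'a mat"
  have "rev_id_mat N * ?A = mat N N (\<lambda>(i, j). f (N - 1 - i) j)"
    by (rule trans[OF rev_id_mat_mult]) auto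
  moreover have "mat N N (\<lambda>(i, j). f (N - 1 - i) j) * rev_id_mat N
      = (mat N N (\<lambda>(i, j). f (N - 1 - i) (N - 1 - j)) :: 'a mat)"
    by (rule trans[OF mult_rev_id_mat]) auto
  ultimately have "rev_id_mat N * ?A * rev_id_mat N = mat N N (\<lambda>(i, j). f (N - 1 - i) (N - 1 - j))"
    by simp
  also have "\<dots> = ?A" using assms by (intro eq_matI) auto
  finally show ?thesis unfolding centrosymmetric_def by simp
qed

lemma has_eigenvalues_mset_eq:
  assumes "has_eigenvalues A es" "mset es = mset es'"
  shows "has_eigenvalues A es'"
  using assms unfolding has_eigenvalues_def by (metis mset_map prod_mset_prod_list)

definition eigenpair :: "nat \<Rightarrow> (nat \<Rightarrow> nat \<Rightarrow> real) \<Rightarrow> complex \<times> (nat \<Rightarrow> complex) \<Rightarrow> bool" where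
  "eigenpair N M p \<longleftrightarrow> (\<forall>i<N. (\<Sum>j<N. complex_of_real (M i j) * snd p j) = fst p * snd p i)"

definition perron_pair :: "real \<Rightarrow> (nat \<Rightarrow> real) \<Rightarrow> complex \<times> (nat \<Rightarrow> complex)" where
  "perron_pair \<beta> u = (complex_of_real \<beta>, \<lambda>i. complex_of_real (u i))"

(* The eigenvectors in L may be complex; the Perron vector u is kept real, nonnegative and
   symmetric, which is what Fiedler gluing needs. *)
definition centro_eigendata ::
    "nat \<Rightarrow> (nat \<Rightarrow> nat \<Rightarrow> real) \<Rightarrow> real \<Rightarrow> (nat \<Rightarrow> real) \<Rightarrow> (complex \<times> (nat \<Rightarrow> complex)) list \<Rightarrow> bool"
  where "centro_eigendata N M \<beta> u L \<longleftrightarrow>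
    (\<forall>i<N. \<forall>j<N. 0 \<le> M i j \<and> M (N - 1 - i) (N - 1 - j) = M i j) \<and>
    0 \<le> \<beta> \<and> (\<forall>i<N. 0 \<le> u i \<and> u (N - 1 - i) = u i) \<and> length L + 1 = N \<and>
    (\<forall>p\<in>set (perron_pair \<beta> u # L). eigenpair N M p) \<and>
    orthonormal N (map snd (perron_pair \<beta> u # L))"

lemma eigenpair_perron_pair_iff:
  "eigenpair N M (perron_pair \<beta> u) \<longleftrightarrow> (\<forall>i<N. (\<Sum>j<N. M i j * u j) = \<beta> * u i)"
proof -
  have "(\<Sum>j<N. complex_of_real (M i j) * complex_of_real (u j)) = complex_of_real (\<Sum>j<N. M i j * u j)"
    for i by simp
  then show ?thesis unfolding eigenpair_def perron_pair_def
    by (simp only: fst_conv snd_conv of_real_mult[symmetric] of_real_eq_iff)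
qed

lemma sum_squares_perron_vector:
  assumes "orthonormal N (map snd (perron_pair \<beta> u # L))"
  shows "(\<Sum>k<N. (u k)\<^sup>2) = 1"
proof -
  have "cinner N (\<lambda>k. complex_of_real (u k)) (\<lambda>k. complex_of_real (u k)) = 1"
    using assms by (simp add: orthonormal_Cons perron_pair_def)
  then have "complex_of_real (\<Sum>k<N. u k * u k) = 1" by (simp only: cinner_of_real)
  then show ?thesis unfolding power2_eq_square by (simp only: of_real_eq_1_iff)
qed

lemma realization_of_centro_eigendata:
  assumes data: "centro_eigendata N M \<beta> u L"
    and es: "mset (complex_of_real \<beta> # map fst L) = mset es"
  shows "\<exists>A :: real mat. A \<in> carrier_mat N N \<and> nonneg_mat A \<and> centrosymmetric A \<and>
           normal_mat (map_mat complex_of_real A) \<and> has_eigenvalues (map_mat complex_of_real A) es"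
proof (intro exI conjI)
  let ?A = "mat N N (\<lambda>(i, j). M i j)"
  let ?LL = "perron_pair \<beta> u # L"
  show "?A \<in> carrier_mat N N" by simp
  show "nonneg_mat ?A" using data unfolding centro_eigendata_def nonneg_mat_def by simp
  show "centrosymmetric ?A" using data unfolding centro_eigendata_def by (intro centrosymmetric_mat) simp
  have len: "length ?LL = N" using data unfolding centro_eigendata_def by simp
  have "normal_mat (map_mat complex_of_real ?A) \<and>
      has_eigenvalues (map_mat complex_of_real ?A) (map fst ?LL)"
  proof (rule normal_eigenvalues_of_orthonormal_eigenvectors)
    show "orthonormal N (map snd ?LL)" using data unfolding centro_eigendata_def by simp
    fix k i assume "k < N" "i < N"
    then have "eigenpair N M (?LL ! k)"
      using data len nth_mem[of k ?LL] unfolding centro_eigendata_def by (metis (no_types))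
    then show "(\<Sum>j<N. map_mat complex_of_real ?A $$ (i, j) * (map snd ?LL ! k) j) =
        map fst ?LL ! k * (map snd ?LL ! k) i"
      using \<open>k < N\<close> \<open>i < N\<close> len unfolding eigenpair_def by (simp del: list.map)
  qed (use len in auto)
  then show "normal_mat (map_mat complex_of_real ?A)" "has_eigenvalues (map_mat complex_of_real ?A) es"
    using has_eigenvalues_mset_eq es by (auto simp: perron_pair_def)
qed

section \<open>Fiedler gluing\<close>

(* mid_splice p c w y is the vector w of length 2 p with the vector y of length c inserted in
   the middle, at positions p, ..., p + c - 1; outer_pos p c k is the new position of w k. *)
definition outer_pos :: "nat \<Rightarrow> nat \<Rightarrow> nat \<Rightarrow> nat" where
  "outer_pos p c k = (if k < p then k else k + c)"

definition mid_splice :: "nat \<Rightarrow> nat \<Rightarrow> (nat \<Rightarrow> 'a) \<Rightarrow> (nat \<Rightarrow> 'a) \<Rightarrow> nat \<Rightarrow> 'a" where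
  "mid_splice p c w y i = (if i < p then w i else if i < p + c then y (i - p) else w (i - c))"

lemma mid_splice_outer_pos [simp]: "mid_splice p c w y (outer_pos p c k) = w k"
  unfolding mid_splice_def outer_pos_def by auto

lemma mid_splice_core [simp]: "j < c \<Longrightarrow> mid_splice p c w y (p + j) = y j"
  unfolding mid_splice_def by auto

lemma mid_splice_cases [consumes 1, case_names outer core]:
  assumes "i < 2 * p + c"
    and "\<And>k. k < 2 * p \<Longrightarrow> i = outer_pos p c k \<Longrightarrow> P" "\<And>j. j < c \<Longrightarrow> i = p + j \<Longrightarrow> P"
  shows P
proof (cases "p \<le> i \<and> i < p + c")
  case True
  then show ?thesis using assms(3)[of "i - p"] by simp
next
  case False
  then show ?thesis
    using assms(1) assms(2)[of "if i < p then i else i - c"] unfolding outer_pos_def by auto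
qed

lemma sum_mid_splice:
  "(\<Sum>i<2 * p + c. f i) = (\<Sum>k<2 * p. f (outer_pos p c k)) + (\<Sum>j<c. f (p + j) :: 'a::comm_monoid_add)"
proof -
  have split: "(\<Sum>i<a + b. g i) = (\<Sum>i<a. g i) + (\<Sum>i<b. g (a + i))" for a b and g :: "nat \<Rightarrow> 'a"
    by (induction b) (auto simp: add.assoc)
  have "(\<Sum>k<2 * p. f (outer_pos p c k)) = (\<Sum>k<p. f k) + (\<Sum>k<p. f (p + c + k))"
    using split[where a = p and b = p and g = "\<lambda>k. f (outer_pos p c k)"]
    by (simp add: mult_2 outer_pos_def add_ac)
  moreover have "(\<Sum>i<2 * p + c. f i) = (\<Sum>i<p. f i) + (\<Sum>j<c. f (p + j)) + (\<Sum>k<p. f (p + c + k))"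
    using split[where a = "p + c" and b = p and g = f] split[where a = p and b = c and g = f]
    by (simp add: mult_2 add_ac)
  ultimately show ?thesis by (simp add: add_ac)
qed

lemma mid_splice_cong:
  assumes "\<And>k. k < 2 * p \<Longrightarrow> w k = w' k" "\<And>j. j < c \<Longrightarrow> y j = y' j" "i < 2 * p + c"
  shows "mid_splice p c w y i = mid_splice p c w' y' i"
  using assms(3) by (cases rule: mid_splice_cases) (simp_all add: assms(1,2))

lemma mid_splice_rev:
  assumes "i < 2 * p + c"
  shows "mid_splice p c w y (2 * p + c - 1 - i) = mid_splice p c (\<lambda>k. w (2 * p - 1 - k)) (\<lambda>j. y (c - 1 - j)) i"
  using assms
proof (cases rule: mid_splice_cases)
  case (outer k)
  then have "2 * p + c - 1 - i = outer_pos p c (2 * p - 1 - k)"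
    unfolding outer_pos_def by auto
  then show ?thesis using outer by simp
next
  case (core j)
  then have "2 * p + c - 1 - i = p + (c - 1 - j)" by simp
  then show ?thesis using core mid_splice_core[of "c - 1 - j" c p w y] by simp
qed

lemma mid_splice_sym:
  assumes "\<And>k. k < 2 * p \<Longrightarrow> w (2 * p - 1 - k) = w k" "\<And>j. j < c \<Longrightarrow> y (c - 1 - j) = y j"
    and i: "i < 2 * p + c"
  shows "mid_splice p c w y (2 * p + c - 1 - i) = mid_splice p c w y i"
  unfolding mid_splice_rev[OF i] by (rule mid_splice_cong[OF _ _ i]) (use assms(1,2) in auto)

lemma mid_splice_nonneg:
  assumes "\<And>k. k < 2 * p \<Longrightarrow> 0 \<le> w k" "\<And>j. j < c \<Longrightarrow> 0 \<le> y j" and i: "i < 2 * p + c"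
  shows "0 \<le> (mid_splice p c w y i :: real)"
  using i by (cases rule: mid_splice_cases) (simp_all add: assms)

lemma mid_splice_comp: "f (mid_splice p c w y i) = mid_splice p c (\<lambda>k. f (w k)) (\<lambda>j. f (y j)) i"
  unfolding mid_splice_def by simp

lemma mid_splice_mult: "mid_splice p c (\<lambda>k. s * w k) (\<lambda>j. s * y j) i = s * mid_splice p c w y i"
  unfolding mid_splice_def by simp

lemma cinner_mid_splice:
  "cinner (2 * p + c) (mid_splice p c w y) (mid_splice p c w' y') = cinner (2 * p) w w' + cinner c y y'"
  unfolding cinner_def by (simp add: sum_mid_splice)

(* Fiedler's matrix [[B, rho u v^T], [rho v u^T, C]], with the rows and columns of C placed in
   the middle of those of B. *)
definition fiedler_glue ::
    "nat \<Rightarrow> nat \<Rightarrow> (nat \<Rightarrow> nat \<Rightarrow> real) \<Rightarrow> (nat \<Rightarrow> nat \<Rightarrow> real) \<Rightarrow> real \<Rightarrow> (nat \<Rightarrow> real) \<Rightarrow> (nat \<Rightarrow> real)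
      \<Rightarrow> nat \<Rightarrow> nat \<Rightarrow> real"
  where "fiedler_glue p c B C \<rho> u v i j =
    mid_splice p c (\<lambda>k. mid_splice p c (B k) (\<lambda>j'. \<rho> * u k * v j') j)
                   (\<lambda>j0. mid_splice p c (\<lambda>k'. \<rho> * v j0 * u k') (C j0) j) i"

lemma fiedler_glue_nonneg:
  assumes "\<And>k k'. k < 2 * p \<Longrightarrow> k' < 2 * p \<Longrightarrow> 0 \<le> B k k'"
    and "\<And>j j'. j < c \<Longrightarrow> j' < c \<Longrightarrow> 0 \<le> C j j'"
    and "\<And>k. k < 2 * p \<Longrightarrow> 0 \<le> u k" "\<And>j. j < c \<Longrightarrow> 0 \<le> v j" "0 \<le> \<rho>"
    and i: "i < 2 * p + c" and j: "j < 2 * p + c"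
  shows "0 \<le> fiedler_glue p c B C \<rho> u v i j"
  using i by (cases rule: mid_splice_cases; use j in \<open>cases rule: mid_splice_cases\<close>)
    (simp_all add: fiedler_glue_def assms)

lemma fiedler_glue_centro:
  assumes "\<And>k k'. k < 2 * p \<Longrightarrow> k' < 2 * p \<Longrightarrow> B (2 * p - 1 - k) (2 * p - 1 - k') = B k k'"
    and "\<And>j j'. j < c \<Longrightarrow> j' < c \<Longrightarrow> C (c - 1 - j) (c - 1 - j') = C j j'"
    and "\<And>k. k < 2 * p \<Longrightarrow> u (2 * p - 1 - k) = u k" "\<And>j. j < c \<Longrightarrow> v (c - 1 - j) = v j"
    and i: "i < 2 * p + c" and j: "j < 2 * p + c"
  shows "fiedler_glue p c B C \<rho> u v (2 * p + c - 1 - i) (2 * p + c - 1 - j) = fiedler_glue p c B C \<rho> u v i j"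
  unfolding fiedler_glue_def mid_splice_rev[OF i] mid_splice_rev[OF j]
  by (rule mid_splice_cong[OF _ _ i]; rule mid_splice_cong[OF _ _ j]) (use assms(1-4) in auto)

lemma fiedler_glue_mult:
  assumes "i < 2 * p + c"
  shows "(\<Sum>j<2 * p + c. complex_of_real (fiedler_glue p c B C \<rho> u v i j) * mid_splice p c w y j) =
    mid_splice p c
      (\<lambda>k. (\<Sum>k'<2 * p. complex_of_real (B k k') * w k') +
        complex_of_real (\<rho> * u k) * (\<Sum>j<c. complex_of_real (v j) * y j))
      (\<lambda>j0. complex_of_real (\<rho> * v j0) * (\<Sum>k<2 * p. complex_of_real (u k) * w k) +
        (\<Sum>j<c. complex_of_real (C j0 j) * y j))
      i"
  using assms by (cases rule: mid_splice_cases)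
    (simp_all add: fiedler_glue_def sum_mid_splice, simp_all add: sum_distrib_left mult_ac)

lemma eigenpair_fiedler_glue_outer:
  assumes "eigenpair (2 * p) B q" and "cinner (2 * p) (\<lambda>k. complex_of_real (u k)) (snd q) = 0"
  shows "eigenpair (2 * p + c) (fiedler_glue p c B C \<rho> u v) (fst q, mid_splice p c (snd q) (\<lambda>_. 0))"
  using assms unfolding eigenpair_def cinner_def
  by (auto simp: fiedler_glue_mult mid_splice_mult[symmetric, of "fst q"] intro!: mid_splice_cong)

lemma eigenpair_fiedler_glue_core:
  assumes "eigenpair c C q" and "cinner c (\<lambda>j. complex_of_real (v j)) (snd q) = 0"
  shows "eigenpair (2 * p + c) (fiedler_glue p c B C \<rho> u v) (fst q, mid_splice p c (\<lambda>_. 0) (snd q))"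
  using assms unfolding eigenpair_def cinner_def
  by (auto simp: fiedler_glue_mult mid_splice_mult[symmetric, of "fst q"] intro!: mid_splice_cong)

lemma eigenpair_fiedler_glue_span:
  assumes B: "eigenpair (2 * p) B (perron_pair \<beta> u)" and C: "eigenpair c C (perron_pair \<gamma> v)"
    and u: "(\<Sum>k<2 * p. (u k)\<^sup>2) = 1" and v: "(\<Sum>j<c. (v j)\<^sup>2) = 1"
    and eq: "\<beta> * a + \<rho> * b = \<theta> * a" "\<rho> * a + \<gamma> * b = \<theta> * b"
  shows "eigenpair (2 * p + c) (fiedler_glue p c B C \<rho> u v)
    (perron_pair \<theta> (mid_splice p c (\<lambda>k. a * u k) (\<lambda>j. b * v j)))"
  unfolding eigenpair_perron_pair_iff
proof (intro allI impI)
  fix i assume i: "i < 2 * p + c"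
  have Bu: "(\<Sum>k'<2 * p. B k k' * u k') = \<beta> * u k" if "k < 2 * p" for k
    using B that unfolding eigenpair_perron_pair_iff by simp
  have Cv: "(\<Sum>j'<c. C j j' * v j') = \<gamma> * v j" if "j < c" for j
    using C that unfolding eigenpair_perron_pair_iff by simp
  show "(\<Sum>j<2 * p + c. fiedler_glue p c B C \<rho> u v i j * mid_splice p c (\<lambda>k. a * u k) (\<lambda>j. b * v j) j) =
      \<theta> * mid_splice p c (\<lambda>k. a * u k) (\<lambda>j. b * v j) i"
    using i
  proof (cases rule: mid_splice_cases)
    case (outer k)
    have "(\<Sum>k'<2 * p. B k k' * (a * u k')) + (\<Sum>j<c. \<rho> * u k * v j * (b * v j)) = (\<beta> * a + \<rho> * b) * u k"
      using Bu[OF outer(1)] v by (simp add: sum_distrib_left[symmetric] mult_ac power2_eq_square algebra_simps)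
    then show ?thesis using outer eq by (simp add: fiedler_glue_def sum_mid_splice)
  next
    case (core j0)
    have "(\<Sum>k<2 * p. \<rho> * v j0 * u k * (a * u k)) = \<rho> * a * v j0 * (\<Sum>k<2 * p. (u k)\<^sup>2)"
      by (simp add: sum_distrib_left mult_ac power2_eq_square)
    then have "(\<Sum>k<2 * p. \<rho> * v j0 * u k * (a * u k)) + (\<Sum>j<c. C j0 j * (b * v j)) = (\<rho> * a + \<gamma> * b) * v j0"
      using Cv[OF core(1)] u by (simp add: sum_distrib_left[symmetric] mult_ac algebra_simps)
    then show ?thesis using core eq by (simp add: fiedler_glue_def sum_mid_splice)
  qed
qed

(* (a, b) and (-b, a) are unit eigenvectors of [[beta, rho], [rho, gamma]] for the eigenvalues
   beta + gamma - mu and mu. *)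
lemma fiedler_weights:
  fixes \<beta> \<gamma> \<mu> :: real
  assumes \<beta>: "0 \<le> \<beta>" and \<gamma>: "0 \<le> \<gamma>" and \<mu>: "\<mu> < 0"
  obtains \<rho> a b where "0 \<le> \<rho>" "0 \<le> a" "0 \<le> b" "a\<^sup>2 + b\<^sup>2 = 1"
    "\<rho> * b = (\<gamma> - \<mu>) * a" "\<rho> * a = (\<beta> - \<mu>) * b"
proof
  define s where "s = \<beta> + \<gamma> - 2 * \<mu>"
  have s: "0 < s" using \<beta> \<gamma> \<mu> unfolding s_def by simp
  define a where "a = sqrt ((\<beta> - \<mu>) / s)"
  define b where "b = sqrt ((\<gamma> - \<mu>) / s)"
  define \<rho> where "\<rho> = sqrt ((\<beta> - \<mu>) * (\<gamma> - \<mu>))"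
  show "0 \<le> \<rho>" "0 \<le> a" "0 \<le> b" unfolding \<rho>_def a_def b_def using \<beta> \<gamma> \<mu> s by simp_all
  have "a\<^sup>2 = (\<beta> - \<mu>) / s" "b\<^sup>2 = (\<gamma> - \<mu>) / s"
    unfolding a_def b_def using \<beta> \<gamma> \<mu> s by simp_all
  then have "a\<^sup>2 + b\<^sup>2 = ((\<beta> - \<mu>) + (\<gamma> - \<mu>)) / s" by (simp only: add_divide_distrib)
  then show "a\<^sup>2 + b\<^sup>2 = 1" using s unfolding s_def by simp
  have "\<rho> * b = sqrt ((\<beta> - \<mu>) * (\<gamma> - \<mu>) * ((\<gamma> - \<mu>) / s))"
    unfolding \<rho>_def b_def by (rule real_sqrt_mult[symmetric])
  also have "(\<beta> - \<mu>) * (\<gamma> - \<mu>) * ((\<gamma> - \<mu>) / s) = (\<gamma> - \<mu>)\<^sup>2 * ((\<beta> - \<mu>) / s)"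
    by (simp add: power2_eq_square)
  finally show "\<rho> * b = (\<gamma> - \<mu>) * a" unfolding a_def using \<gamma> \<mu> by (subst (asm) real_sqrt_mult) simp
  have "\<rho> * a = sqrt ((\<beta> - \<mu>) * (\<gamma> - \<mu>) * ((\<beta> - \<mu>) / s))"
    unfolding \<rho>_def a_def by (rule real_sqrt_mult[symmetric])
  also have "(\<beta> - \<mu>) * (\<gamma> - \<mu>) * ((\<beta> - \<mu>) / s) = (\<beta> - \<mu>)\<^sup>2 * ((\<gamma> - \<mu>) / s)"
    by (simp add: power2_eq_square)
  finally show "\<rho> * a = (\<beta> - \<mu>) * b" unfolding b_def using \<beta> \<mu> by (subst (asm) real_sqrt_mult) simp
qed

lemma orthonormal_fiedler_basis:
  fixes u v :: "nat \<Rightarrow> real" and a b :: real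
  assumes U: "orthonormal (2 * p) ((\<lambda>k. complex_of_real (u k)) # WB)"
    and V: "orthonormal c ((\<lambda>j. complex_of_real (v j)) # YC)" and ab: "a\<^sup>2 + b\<^sup>2 = 1"
  shows "orthonormal (2 * p + c)
    ((\<lambda>i. complex_of_real (mid_splice p c (\<lambda>k. a * u k) (\<lambda>j. b * v j) i)) #
     map (\<lambda>w. mid_splice p c w (\<lambda>_. 0)) WB @ map (mid_splice p c (\<lambda>_. 0)) YC @
     [\<lambda>i. complex_of_real (mid_splice p c (\<lambda>k. - b * u k) (\<lambda>j. a * v j) i)])"
proof -
  let ?u = "\<lambda>k. complex_of_real (u k)" and ?v = "\<lambda>j. complex_of_real (v j)"
  have u: "cinner (2 * p) ?u ?u = 1" and v: "cinner c ?v ?v = 1"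
    using U V unfolding orthonormal_Cons by simp_all
  have uW: "cinner (2 * p) ?u w = 0" "cinner (2 * p) w ?u = 0" if "w \<in> set WB" for w
    using U that cinner_commute[of "2 * p" w ?u] unfolding orthonormal_Cons by auto
  have vY: "cinner c ?v y = 0" "cinner c y ?v = 0" if "y \<in> set YC" for y
    using V that cinner_commute[of c y ?v] unfolding orthonormal_Cons by auto
  have WB: "orthonormal (2 * p) WB" and YC: "orthonormal c YC"
    using U V unfolding orthonormal_Cons by simp_all
  have of_real_mid_splice: "(\<lambda>i. complex_of_real (mid_splice p c w y i)) =
      mid_splice p c (\<lambda>k. complex_of_real (w k)) (\<lambda>j. complex_of_real (y j))" for w y
    by (simp add: mid_splice_comp)
  have "complex_of_real (a\<^sup>2 + b\<^sup>2) = 1" using ab by simp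
  then have ab': "complex_of_real a * complex_of_real a + complex_of_real b * complex_of_real b = 1"
    by (simp add: power2_eq_square)
  then have ab'': "complex_of_real b * complex_of_real b + complex_of_real a * complex_of_real a = 1"
    by (simp only: add.commute)
  show ?thesis
    unfolding of_real_mid_splice
    using WB YC u v uW vY ab' ab''
    by (auto simp: orthonormal_def sorted_wrt_append sorted_wrt_map cinner_mid_splice)
qed

lemma centro_eigendata_glue:
  assumes B: "centro_eigendata (2 * p) B \<beta> u LB" and C: "centro_eigendata c C \<gamma> v LC" and \<mu>: "\<mu> < 0"
  shows "\<exists>M w L. centro_eigendata (2 * p + c) M (\<beta> + \<gamma> - \<mu>) w L \<and>
    map fst L = map fst LB @ map fst LC @ [complex_of_real \<mu>]"
proof -
  from B have B_entries: "\<forall>i<2 * p. \<forall>j<2 * p. 0 \<le> B i j \<and> B (2 * p - 1 - i) (2 * p - 1 - j) = B i j"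
    and \<beta>: "0 \<le> \<beta>" and u: "\<forall>i<2 * p. 0 \<le> u i \<and> u (2 * p - 1 - i) = u i"
    and LB: "length LB + 1 = 2 * p" and eigB: "\<forall>q\<in>set (perron_pair \<beta> u # LB). eigenpair (2 * p) B q"
    and onB: "orthonormal (2 * p) (map snd (perron_pair \<beta> u # LB))"
    unfolding centro_eigendata_def by auto
  from C have C_entries: "\<forall>i<c. \<forall>j<c. 0 \<le> C i j \<and> C (c - 1 - i) (c - 1 - j) = C i j"
    and \<gamma>: "0 \<le> \<gamma>" and v: "\<forall>i<c. 0 \<le> v i \<and> v (c - 1 - i) = v i"
    and LC: "length LC + 1 = c" and eigC: "\<forall>q\<in>set (perron_pair \<gamma> v # LC). eigenpair c C q"
    and onC: "orthonormal c (map snd (perron_pair \<gamma> v # LC))"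
    unfolding centro_eigendata_def by auto
  obtain \<rho> a b where \<rho>: "0 \<le> \<rho>" and ab: "0 \<le> a" "0 \<le> b" "a\<^sup>2 + b\<^sup>2 = 1"
    and eq: "\<rho> * b = (\<gamma> - \<mu>) * a" "\<rho> * a = (\<beta> - \<mu>) * b"
    using fiedler_weights[OF \<beta> \<gamma> \<mu>] by blast
  define M where "M = fiedler_glue p c B C \<rho> u v"
  define w where "w = mid_splice p c (\<lambda>k. a * u k) (\<lambda>j. b * v j)"
  define x where "x = mid_splice p c (\<lambda>k. - b * u k) (\<lambda>j. a * v j)"
  define L where "L = map (\<lambda>q. (fst q, mid_splice p c (snd q) (\<lambda>_. 0))) LB @
    map (\<lambda>q. (fst q, mid_splice p c (\<lambda>_. 0) (snd q))) LC @ [perron_pair \<mu> x]"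
  have u2: "(\<Sum>k<2 * p. (u k)\<^sup>2) = 1" and v2: "(\<Sum>j<c. (v j)\<^sup>2) = 1"
    using onB onC by (simp_all add: sum_squares_perron_vector)
  have orthB: "cinner (2 * p) (\<lambda>k. complex_of_real (u k)) (snd q) = 0" if "q \<in> set LB" for q
    using onB that by (auto simp: orthonormal_Cons perron_pair_def)
  have orthC: "cinner c (\<lambda>j. complex_of_real (v j)) (snd q) = 0" if "q \<in> set LC" for q
    using onC that by (auto simp: orthonormal_Cons perron_pair_def)
  have perron_B: "eigenpair (2 * p) B (perron_pair \<beta> u)" and perron_C: "eigenpair c C (perron_pair \<gamma> v)"
    using eigB eigC by simp_all
  have "\<forall>q\<in>set (perron_pair (\<beta> + \<gamma> - \<mu>) w # L). eigenpair (2 * p + c) M q"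
  proof -
    have "eigenpair (2 * p + c) M (perron_pair (\<beta> + \<gamma> - \<mu>) w)"
      unfolding M_def w_def using eq
      by (intro eigenpair_fiedler_glue_span[OF perron_B perron_C u2 v2]) (simp_all add: algebra_simps)
    moreover have "eigenpair (2 * p + c) M (perron_pair \<mu> x)"
      unfolding M_def x_def using eq
      by (intro eigenpair_fiedler_glue_span[OF perron_B perron_C u2 v2]) (simp_all add: algebra_simps)
    ultimately show ?thesis
      unfolding L_def M_def using eigB eigC orthB orthC
      by (auto intro: eigenpair_fiedler_glue_outer eigenpair_fiedler_glue_core)
  qed
  moreover have "orthonormal (2 * p + c) (map snd (perron_pair (\<beta> + \<gamma> - \<mu>) w # L))"
    using orthonormal_fiedler_basis[of p u "map snd LB" c v "map snd LC" a b] onB onC ab(3)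
    unfolding L_def w_def x_def by (simp add: perron_pair_def comp_def)
  moreover have "0 \<le> M i j \<and> M (2 * p + c - 1 - i) (2 * p + c - 1 - j) = M i j"
    if "i < 2 * p + c" "j < 2 * p + c" for i j
    unfolding M_def using that
    by (intro conjI fiedler_glue_nonneg fiedler_glue_centro) (use B_entries C_entries u v \<rho> in auto)
  moreover have "0 \<le> w i \<and> w (2 * p + c - 1 - i) = w i" if "i < 2 * p + c" for i
    unfolding w_def using that
    by (intro conjI mid_splice_nonneg mid_splice_sym) (use u v ab in auto)
  ultimately have "centro_eigendata (2 * p + c) M (\<beta> + \<gamma> - \<mu>) w L"
    unfolding centro_eigendata_def using \<beta> \<gamma> \<mu> LB LC by (simp add: L_def)
  moreover have "map fst L = map fst LB @ map fst LC @ [complex_of_real \<mu>]"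
    unfolding L_def by (simp add: perron_pair_def comp_def)
  ultimately show ?thesis by blast
qed

section \<open>Fourier base matrices\<close>

(* centro_perm reverses the second half of the indices, so that
   fourier_vec K s (2 K - 1 - i) = (-1)^s * fourier_vec K s i and fourier_mat is centrosymmetric. *)
definition centro_perm :: "nat \<Rightarrow> nat \<Rightarrow> nat" where
  "centro_perm K i = (if i < K then i else 3 * K - 1 - i)"

definition fourier_vec :: "nat \<Rightarrow> nat \<Rightarrow> nat \<Rightarrow> complex" where
  "fourier_vec K s i =
    cis (pi * real s * real (centro_perm K i) / real K) / complex_of_real (sqrt (real (2 * K)))"

lemma centro_perm_inv:
  "a < 2 * K \<Longrightarrow> centro_perm K (centro_perm K a) = a" "a < 2 * K \<Longrightarrow> centro_perm K a < 2 * K"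
  unfolding centro_perm_def by auto

lemma sum_centro_perm: "(\<Sum>i<2 * K. f (centro_perm K i)) = (\<Sum>x<2 * K. f x)"
  by (rule sum.reindex_bij_witness[where i = "centro_perm K" and j = "centro_perm K"])
    (auto simp: centro_perm_inv)

lemma cnj_fourier_vec_mult:
  assumes "0 < K"
  shows "cnj (fourier_vec K s i) * fourier_vec K t i = cis (pi * (real t - real s) / real K) ^ (centro_perm K i) / of_nat (2 * K)"
proof -
  have r: "complex_of_real (sqrt (real (2 * K))) * complex_of_real (sqrt (real (2 * K))) = of_nat (2 * K)"
  proof -
    have "sqrt (real (2 * K)) * sqrt (real (2 * K)) = real (2 * K)" by simp
    then show ?thesis by (metis of_real_mult of_real_of_nat_eq)
  qed
  have "cnj (fourier_vec K s i) * fourier_vec K t i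
     = cis (- (pi * real s * real (centro_perm K i) / real K)) * cis (pi * real t * real (centro_perm K i) / real K)
       / (complex_of_real (sqrt (real (2 * K))) * complex_of_real (sqrt (real (2 * K))))"
    unfolding fourier_vec_def by (simp add: cis_cnj)
  also have "cis (- (pi * real s * real (centro_perm K i) / real K)) * cis (pi * real t * real (centro_perm K i) / real K)
      = cis (real (centro_perm K i) * (pi * (real t - real s) / real K))"
    by (simp add: cis_mult algebra_simps add_divide_distrib diff_divide_distrib)
  also have "\<dots> = cis (pi * (real t - real s) / real K) ^ (centro_perm K i)" by (simp add: DeMoivre)
  finally show ?thesis unfolding r .
qed

lemma cis_frequency_ne_1:
  assumes K: "0 < K" and st: "s < 2 * K" "t < 2 * K" "s \<noteq> t"
  shows "cis (pi * (real t - real s) / real K) \<noteq> 1"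
proof
  assume "cis (pi * (real t - real s) / real K) = 1"
  then have "cos (pi * (real t - real s) / real K) = 1" by (metis cis.simps(1) one_complex.simps(1))
  then obtain k :: int where k: "pi * (real t - real s) / real K = real_of_int k * 2 * pi"
    by (auto simp: cos_one_2pi_int)
  then have "pi * (real t - real s) = pi * (2 * real K * real_of_int k)" using K by (simp add: field_simps)
  then have "real t - real s = 2 * real K * real_of_int k" by (metis mult_left_cancel pi_neq_zero)
  moreover have "\<bar>real t - real s\<bar> < 2 * real K" using st by auto
  ultimately have "\<bar>real_of_int k\<bar> < 1" using K by (simp add: abs_mult)
  then have "k = 0" by linarith
  then show False using \<open>real t - real s = 2 * real K * real_of_int k\<close> st(3) by simp
qed

lemma cinner_fourier_vec:
  assumes K: "0 < K" and st: "s < 2 * K" "t < 2 * K"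
  shows "cinner (2 * K) (fourier_vec K s) (fourier_vec K t) = (if s = t then 1 else 0)"
proof -
  let ?q = "cis (pi * (real t - real s) / real K)"
  have "cinner (2 * K) (fourier_vec K s) (fourier_vec K t) = (\<Sum>i<2 * K. ?q ^ (centro_perm K i) / of_nat (2 * K))"
    unfolding cinner_def using cnj_fourier_vec_mult[OF K] by simp
  also have "\<dots> = (\<Sum>x<2 * K. ?q ^ x / of_nat (2 * K))" by (rule sum_centro_perm)
  also have "\<dots> = (\<Sum>x<2 * K. ?q ^ x) / of_nat (2 * K)" by (simp add: sum_divide_distrib)
  finally have e: "cinner (2 * K) (fourier_vec K s) (fourier_vec K t) = (\<Sum>x<2 * K. ?q ^ x) / of_nat (2 * K)" .
  show ?thesis
  proof (cases "s = t")
    case True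
    then show ?thesis using e K by simp
  next
    case False
    have q1: "?q \<noteq> 1" by (rule cis_frequency_ne_1[OF K st False])
    have "?q ^ (2 * K) = cis (real (2 * K) * (pi * (real t - real s) / real K))" by (simp add: DeMoivre)
    also have "real (2 * K) * (pi * (real t - real s) / real K) = 2 * pi * (real t - real s)"
      using K by (simp add: field_simps)
    also have "cis (2 * pi * (real t - real s)) = 1"
    proof (rule cis_multiple_2pi)
      show "real t - real s \<in> \<int>" by (metis Ints_diff Ints_of_nat)
    qed
    finally have "?q ^ (2 * K) = 1" .
    then have "(\<Sum>x<2 * K. ?q ^ x) = 0" using q1 by (simp add: geometric_sum)
    then show ?thesis using e False by simp
  qed
qed

lemma fourier_vec_0: "fourier_vec K 0 i = complex_of_real (1 / sqrt (real (2 * K)))"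
  unfolding fourier_vec_def by simp

lemma cnj_fourier_vec:
  assumes "s < 2 * K"
  shows "cnj (fourier_vec K s i) = fourier_vec K ((2 * K - s) mod (2 * K)) i"
proof (cases "s = 0")
  case True then show ?thesis by (simp add: fourier_vec_0)
next
  case False
  then have m: "(2 * K - s) mod (2 * K) = 2 * K - s" using assms by simp
  have "real (2 * K - s) = 2 * real K - real s" using assms by simp
  then have eqn: "pi * real (2 * K - s) * real (centro_perm K i) / real K
      = 2 * pi * real (centro_perm K i) + (- (pi * real s * real (centro_perm K i) / real K))"
    using assms by (simp add: field_simps)
  have "cis (pi * real (2 * K - s) * real (centro_perm K i) / real K)
       = cis (2 * pi * real (centro_perm K i)) * cis (- (pi * real s * real (centro_perm K i) / real K))"
    by (subst eqn, rule cis_mult[symmetric])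
  also have "cis (2 * pi * real (centro_perm K i)) = 1" by (rule cis_multiple_2pi) simp
  finally show ?thesis unfolding m fourier_vec_def by (simp add: cis_cnj)
qed

lemma fourier_vec_shift:
  assumes "centro_perm K i' = centro_perm K i + K" "0 < K"
  shows "fourier_vec K s i' = (- 1) ^ s * fourier_vec K s i"
proof -
  have "pi * real s * real (centro_perm K i') / real K = real s * pi + pi * real s * real (centro_perm K i) / real K"
    using assms by (simp add: field_simps)
  then have "cis (pi * real s * real (centro_perm K i') / real K) = cis (real s * pi) * cis (pi * real s * real (centro_perm K i) / real K)"
    by (simp add: cis_mult)
  also have "cis (real s * pi) = (- 1) ^ s" by (simp flip: DeMoivre add: cis_pi)
  finally show ?thesis unfolding fourier_vec_def by simp
qed

lemma fourier_vec_rev: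
  assumes "i < 2 * K" "0 < K"
  shows "fourier_vec K s (2 * K - 1 - i) = (- 1) ^ s * fourier_vec K s i"
proof (cases "i < K")
  case True
  then show ?thesis by (intro fourier_vec_shift) (use assms in \<open>auto simp: centro_perm_def\<close>)
next
  case False
  have "fourier_vec K s i = (- 1) ^ s * fourier_vec K s (2 * K - 1 - i)"
    by (intro fourier_vec_shift) (use assms False in \<open>auto simp: centro_perm_def\<close>)
  then have "(- 1) ^ s * fourier_vec K s i = ((- 1) ^ s * (- 1) ^ s) * fourier_vec K s (2 * K - 1 - i)" by simp
  also have "(- 1) ^ s * (- 1) ^ s = (1::complex)" by (simp flip: power_add)
  finally show ?thesis by simp
qed

lemma norm_fourier_vec: "cmod (fourier_vec K s i) = 1 / sqrt (real (2 * K))"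
  unfolding fourier_vec_def by (simp add: norm_divide)

lemma orthonormal_fourier_vecs:
  assumes "0 < K"
  shows "orthonormal (2 * K) (map (fourier_vec K) [0..<2 * K])"
  unfolding orthonormal_def sorted_wrt_map
  by (auto simp: cinner_fourier_vec[OF assms] intro!: sorted_wrt_mono_rel[OF _ sorted_wrt_upt])

definition fourier_mat :: "nat \<Rightarrow> (nat \<Rightarrow> complex) \<Rightarrow> nat \<Rightarrow> nat \<Rightarrow> complex" where
  "fourier_mat K d i j = (\<Sum>s<2 * K. d s * fourier_vec K s i * cnj (fourier_vec K s j))"

lemma fourier_mat_real:
  assumes K: "0 < K" and dc: "\<And>s. s < 2 * K \<Longrightarrow> d ((2 * K - s) mod (2 * K)) = cnj (d s)"
  shows "complex_of_real (Re (fourier_mat K d i j)) = fourier_mat K d i j"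
proof -
  define \<sigma> where "\<sigma> s = (2 * K - s) mod (2 * K)" for s
  have \<sigma>: "\<sigma> (\<sigma> s) = s" "\<sigma> s < 2 * K" if "s < 2 * K" for s
    using that K unfolding \<sigma>_def by (auto simp: mod_if)
  have "cnj (fourier_mat K d i j) = (\<Sum>s<2 * K. cnj (d s) * cnj (fourier_vec K s i) * fourier_vec K s j)"
    unfolding fourier_mat_def by simp
  also have "\<dots> = (\<Sum>s<2 * K. d (\<sigma> s) * fourier_vec K (\<sigma> s) i * cnj (fourier_vec K (\<sigma> s) j))"
  proof (intro sum.cong refl)
    fix s assume s: "s \<in> {..<2 * K}"
    have "cnj (fourier_vec K (\<sigma> s) j) = fourier_vec K s j"
      using cnj_fourier_vec[of "\<sigma> s" K j] \<sigma>[of s] s by (simp add: \<sigma>_def)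
    then show "cnj (d s) * cnj (fourier_vec K s i) * fourier_vec K s j =
        d (\<sigma> s) * fourier_vec K (\<sigma> s) i * cnj (fourier_vec K (\<sigma> s) j)"
      using dc[of s] cnj_fourier_vec[of s K i] s unfolding \<sigma>_def by simp
  qed
  also have "\<dots> = fourier_mat K d i j" unfolding fourier_mat_def
    by (rule sum.reindex_bij_witness[where i = \<sigma> and j = \<sigma>]) (auto simp: \<sigma>)
  finally have "Im (fourier_mat K d i j) = 0" by (metis cnj.simps(2) neg_equal_zero)
  then show ?thesis by (simp add: complex_eq_iff)
qed

lemma fourier_mat_eigen:
  assumes K: "0 < K" and t: "t < 2 * K"
  shows "(\<Sum>j<2 * K. fourier_mat K d i j * fourier_vec K t j) = d t * fourier_vec K t i"
proof -
  have "(\<Sum>j<2 * K. fourier_mat K d i j * fourier_vec K t j)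
      = (\<Sum>s<2 * K. d s * fourier_vec K s i * cinner (2 * K) (fourier_vec K s) (fourier_vec K t))"
    unfolding fourier_mat_def cinner_def
    by (simp add: sum_distrib_left sum_distrib_right mult_ac) (rule sum.swap)
  also have "\<dots> = (\<Sum>s<2 * K. if s = t then d t * fourier_vec K t i else 0)"
    using cinner_fourier_vec[OF K _ t] by (intro sum.cong refl) auto
  also have "\<dots> = d t * fourier_vec K t i" using t by (simp add: sum.delta')
  finally show ?thesis .
qed

(* The term s = 0 contributes beta / (2 K) to every entry, each other term at most
   |d s| / (2 K) in modulus. *)
lemma fourier_mat_nonneg:
  assumes K: "0 < K" and d0: "d 0 = complex_of_real \<beta>"
    and bound: "(\<Sum>s\<in>{1..<2 * K}. cmod (d s)) \<le> \<beta>"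
  shows "0 \<le> Re (fourier_mat K d i j)"
proof -
  let ?R = "\<Sum>s\<in>{1..<2 * K}. d s * fourier_vec K s i * cnj (fourier_vec K s j)"
  have "{..<2 * K} = insert 0 {1..<2 * K}" using K by auto
  then have split: "fourier_mat K d i j = d 0 * fourier_vec K 0 i * cnj (fourier_vec K 0 j) + ?R"
    unfolding fourier_mat_def by simp
  have "\<bar>Re ?R\<bar> \<le> cmod ?R" by (rule abs_Re_le_cmod)
  also have "\<dots> \<le> (\<Sum>s\<in>{1..<2 * K}. cmod (d s * fourier_vec K s i * cnj (fourier_vec K s j)))"
    by (rule norm_sum)
  also have "\<dots> = (\<Sum>s\<in>{1..<2 * K}. cmod (d s)) / real (2 * K)"
    by (simp add: norm_mult norm_fourier_vec power2_eq_square[symmetric] power_divide sum_divide_distrib)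
  also have "\<dots> \<le> \<beta> / real (2 * K)" using bound K by (simp add: divide_right_mono)
  also have "\<dots> = Re (d 0 * fourier_vec K 0 i * cnj (fourier_vec K 0 j))"
    unfolding d0 fourier_vec_0 using K by (simp add: power2_eq_square[symmetric] power_divide)
  finally show ?thesis unfolding split by simp
qed

lemma fourier_mat_centro:
  assumes "0 < K" "i < 2 * K" "j < 2 * K"
  shows "fourier_mat K d (2 * K - 1 - i) (2 * K - 1 - j) = fourier_mat K d i j"
proof -
  have "((- 1) ^ s * (- 1) ^ s :: complex) = 1" for s by (simp flip: power_add)
  then show ?thesis
    unfolding fourier_mat_def fourier_vec_rev[OF assms(2,1)] fourier_vec_rev[OF assms(3,1)]
    by (intro sum.cong refl) (simp add: mult_ac)
qed

lemma centro_eigendata_fourier: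
  fixes d :: "nat \<Rightarrow> complex"
  assumes K: "0 < K" and d0: "d 0 = complex_of_real \<beta>"
    and dc: "\<And>s. s < 2 * K \<Longrightarrow> d ((2 * K - s) mod (2 * K)) = cnj (d s)"
    and bound: "(\<Sum>s\<in>{1..<2 * K}. cmod (d s)) \<le> \<beta>"
  shows "\<exists>M u L. centro_eigendata (2 * K) M \<beta> u L \<and> map fst L = map d [1..<2 * K]"
proof (intro exI conjI)
  let ?M = "\<lambda>i j. Re (fourier_mat K d i j)" and ?u = "\<lambda>i::nat. 1 / sqrt (real (2 * K))"
  let ?L = "map (\<lambda>s. (d s, fourier_vec K s)) [1..<2 * K]"
  have "(\<lambda>i. complex_of_real (?u i)) = fourier_vec K 0" by (simp add: fourier_vec_0 fun_eq_iff)
  then have all: "perron_pair \<beta> ?u # ?L = map (\<lambda>s. (d s, fourier_vec K s)) [0..<2 * K]"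
    unfolding perron_pair_def using K by (simp add: d0[symmetric] upt_conv_Cons)
  have "0 \<le> \<beta>" using bound sum_nonneg[of "{1..<2 * K}" "\<lambda>s. cmod (d s)"] by simp
  moreover have "eigenpair (2 * K) ?M (d s, fourier_vec K s)" if "s < 2 * K" for s
    unfolding eigenpair_def using fourier_mat_real[where d = d, OF K dc] fourier_mat_eigen[OF K that] by simp
  ultimately show "centro_eigendata (2 * K) ?M \<beta> ?u ?L"
    unfolding centro_eigendata_def all
    using K fourier_mat_nonneg[OF K d0 bound] fourier_mat_centro[OF K] orthonormal_fourier_vecs[OF K]
    by (auto simp: map_map comp_def)
  show "map fst ?L = map d [1..<2 * K]" by simp
qed

section \<open>Realising the spectrum\<close>

lemma centro_eigendata_one: "centro_eigendata 1 (\<lambda>_ _. 0) 0 (\<lambda>_. 1) []"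
  unfolding centro_eigendata_def eigenpair_def perron_pair_def orthonormal_def cinner_def by simp

lemma centro_eigendata_two:
  assumes "0 \<le> \<tau>"
  shows "\<exists>M u L. centro_eigendata 2 M \<tau> u L \<and> map fst L = [complex_of_real (- \<tau>)]"
proof -
  let ?d = "\<lambda>s::nat. if s = 0 then complex_of_real \<tau> else complex_of_real (- \<tau>)"
  have "(\<Sum>s\<in>{1..<2}. cmod (?d s)) \<le> \<tau>" using assms by simp
  moreover have "?d ((2 - s) mod 2) = cnj (?d s)" if "s < 2" for s
    using that by (cases s) auto
  moreover have "[Suc 0..<2] = [1]" by (simp add: numeral_2_eq_2)
  ultimately show ?thesis using centro_eigendata_fourier[of 1 ?d \<tau>] by simp
qed

lemma centro_eigendata_extend:
  assumes "centro_eigendata (2 * K) M \<beta> u L" and "\<forall>x\<in>set xs. x < 0"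
  shows "\<exists>M' u' L'. centro_eigendata (2 * K + length xs) M' (\<beta> - sum_list xs) u' L' \<and>
    mset (map fst L') = mset (map fst L) + mset (map complex_of_real xs)"
  using assms
proof (induction xs arbitrary: K M \<beta> u L rule: induct_list012)
  case 1
  then show ?case by auto
next
  case (2 x)
  then obtain M' u' L' where "centro_eigendata (2 * K + length [x]) M' (\<beta> - sum_list [x]) u' L'"
    and "map fst L' = map fst L @ [complex_of_real x]"
    using centro_eigendata_glue[OF "2.prems"(1) centro_eigendata_one, of x] by auto
  then show ?case by (intro exI conjI) (assumption, simp del: mset_map)
next
  case (3 x y zs)
  obtain C v LC where C: "centro_eigendata 2 C (- x) v LC" "map fst LC = [complex_of_real x]"
    using centro_eigendata_two[of "- x"] "3.prems"(2) by auto
  obtain M1 u1 L1 where "centro_eigendata (2 * (K + 1)) M1 (\<beta> - x - y) u1 L1"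
    and L1: "map fst L1 = map fst L @ [complex_of_real x, complex_of_real y]"
    using centro_eigendata_glue[OF "3.prems"(1) C(1), of y] "3.prems"(2) C(2)
    by (auto simp: algebra_simps)
  from "3.IH"(1)[OF this(1)] "3.prems"(2) obtain M' u' L' where
    "centro_eigendata (2 * (K + 1) + length zs) M' (\<beta> - x - y - sum_list zs) u' L'"
    "mset (map fst L') = mset (map fst L1) + mset (map complex_of_real zs)"
    by auto
  then show ?case using L1 by (auto simp: algebra_simps)
qed

lemma centro_eigendata_conj_pairs:
  fixes \<mu> \<beta> :: real and z :: "nat \<Rightarrow> complex"
  assumes bound: "\<bar>\<mu>\<bar> + 2 * (\<Sum>j = 1..m. cmod (z j)) \<le> \<beta>"
  shows "\<exists>M u L. centro_eigendata (2 * (m + 1)) M \<beta> u L \<and>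
    mset (map fst L) = mset (complex_of_real \<mu> # map z [1..<m + 1] @ map (\<lambda>j. cnj (z j)) [1..<m + 1])"
proof -
  define K where "K = m + 1"
  define d where "d s = (if s = 0 then complex_of_real \<beta> else if s = K then complex_of_real \<mu>
    else if s < K then z s else cnj (z (2 * K - s)))" for s
  have K: "0 < K" unfolding K_def by simp
  have "[1..<2 * K] = [1..<K] @ K # [Suc K..<2 * K]"
    using upt_add_eq_append[of 1 K K] K by (simp add: mult_2 upt_conv_Cons)
  moreover have "map d [1..<K] = map z [1..<m + 1]"
    unfolding K_def by (intro map_cong) (auto simp: d_def K_def)
  moreover have "map d [Suc K..<2 * K] = rev (map (\<lambda>j. cnj (z j)) [1..<m + 1])"
  proof (rule nth_equalityI)
    show "length (map d [Suc K..<2 * K]) = length (rev (map (\<lambda>j. cnj (z j)) [1..<m + 1]))"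
      unfolding K_def by (simp del: upt_Suc)
    fix i assume "i < length (map d [Suc K..<2 * K])"
    then have i: "i < m" unfolding K_def by (simp del: upt_Suc)
    then have "Suc (m - Suc i) = m - i" by simp
    then show "map d [Suc K..<2 * K] ! i = rev (map (\<lambda>j. cnj (z j)) [1..<m + 1]) ! i"
      using i unfolding d_def K_def by (simp add: rev_nth del: upt_Suc)
  qed
  ultimately have spec: "mset (map d [1..<2 * K]) =
      mset (complex_of_real \<mu> # map z [1..<m + 1] @ map (\<lambda>j. cnj (z j)) [1..<m + 1])"
    using K by (simp add: d_def)
  have "(\<Sum>s\<in>{1..<2 * K}. cmod (d s)) = sum_list (map cmod (map d [1..<2 * K]))"
    by (simp add: sum_set_upt_conv_sum_list_nat[symmetric])
  also have "\<dots> = sum_list (map cmod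
      (complex_of_real \<mu> # map z [1..<m + 1] @ map (\<lambda>j. cnj (z j)) [1..<m + 1]))"
    using arg_cong[OF spec, of "\<lambda>A. sum_mset (image_mset cmod A)"]
    by (simp only: mset_map[symmetric] sum_mset_sum_list)
  also have "\<dots> = \<bar>\<mu>\<bar> + 2 * (\<Sum>j = 1..m. cmod (z j))"
    by (simp add: comp_def sum_set_upt_conv_sum_list_nat[symmetric] atLeastLessThanSuc_atLeastAtMost
      del: upt_Suc)
  finally have "(\<Sum>s\<in>{1..<2 * K}. cmod (d s)) \<le> \<beta>" using bound by simp
  moreover have "d ((2 * K - s) mod (2 * K)) = cnj (d s)" if "s < 2 * K" for s
    using that K by (cases "s = 0") (auto simp: d_def)
  ultimately obtain M u L where data: "centro_eigendata (2 * K) M \<beta> u L"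
    and "map fst L = map d [1..<2 * K]"
    using centro_eigendata_fourier[OF K, of d \<beta>] by (auto simp: d_def)
  then have "mset (map fst L) =
      mset (complex_of_real \<mu> # map z [1..<m + 1] @ map (\<lambda>j. cnj (z j)) [1..<m + 1])"
    using spec by (simp only:)
  with data show ?thesis unfolding K_def by blast
qed

lemma negative_of_decreasing:
  fixes f :: "nat \<Rightarrow> 'a :: {order, zero}"
  assumes "f 1 < 0" and "\<And>j. 1 \<le> j \<Longrightarrow> j < n \<Longrightarrow> f (Suc j) \<le> f j" and "1 \<le> j" "j \<le> n"
  shows "f j < 0"
  using assms(3,4)
proof (induction j rule: dec_induct)
  case base
  then show ?case using assms(1) by simp
next
  case (step k)
  then show ?case using assms(2)[of k] by (simp add: order.strict_trans1)
qed

theorem theorem3p15: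
  fixes n m :: nat and lam :: "nat \<Rightarrow> real" and z :: "nat \<Rightarrow> complex"
  assumes "n \<ge> 3" and "m \<ge> 1"
    and "lam 0 \<ge> 0" and "0 > lam 1"
    and "\<And>j. 1 \<le> j \<Longrightarrow> j < n \<Longrightarrow> lam j \<ge> lam (Suc j)"
    and "\<And>j. 1 \<le> j \<Longrightarrow> j \<le> m \<Longrightarrow> Im (z j) > 0"
    and "lam 0 + (\<Sum>j = 1..n. lam j) - 2 * (\<Sum>j = 1..m. cmod (z j)) \<ge> 0"
  shows "\<exists>A :: real mat. A \<in> carrier_mat (n + 2*m + 1) (n + 2*m + 1) \<and>
           nonneg_mat A \<and> centrosymmetric A \<and>
           normal_mat (map_mat complex_of_real A) \<and>
           has_eigenvalues (map_mat complex_of_real A)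
             (map (\<lambda>j. complex_of_real (lam j)) [0..<n+1] @ map z [1..<m+1]
              @ map (\<lambda>j. cnj (z j)) [1..<m+1])"
proof -
  let ?xs = "map lam [2..<n + 1]"
  have "sum_list ?xs = (\<Sum>j = 2..n. lam j)"
    by (simp add: sum_set_upt_conv_sum_list_nat[symmetric] atLeastLessThanSuc_atLeastAtMost del: upt_Suc)
  moreover have "(\<Sum>j = 1..n. lam j) = lam 1 + (\<Sum>j = 2..n. lam j)"
    using sum.atLeast_Suc_atMost[of 1 n lam] assms(1) unfolding Suc_1 by simp
  ultimately have "\<bar>lam 1\<bar> + 2 * (\<Sum>j = 1..m. cmod (z j)) \<le> lam 0 + sum_list ?xs"
    using assms(4,7) by simp
  then obtain M u L where "centro_eigendata (2 * (m + 1)) M (lam 0 + sum_list ?xs) u L"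
    and L: "mset (map fst L) =
      mset (complex_of_real (lam 1) # map z [1..<m + 1] @ map (\<lambda>j. cnj (z j)) [1..<m + 1])"
    using centro_eigendata_conj_pairs by blast
  moreover have "\<forall>x\<in>set ?xs. x < 0" using negative_of_decreasing[of lam, OF assms(4,5)] by auto
  ultimately obtain M' u' L'
    where data: "centro_eigendata (2 * (m + 1) + length ?xs) M'
        (lam 0 + sum_list ?xs - sum_list ?xs) u' L'"
      and L': "mset (map fst L') = mset (map fst L) + mset (map complex_of_real ?xs)"
    using centro_eigendata_extend by blast
  have "2 * (m + 1) + length ?xs = n + 2 * m + 1" using assms(1) by simp
  with data have "centro_eigendata (n + 2 * m + 1) M' (lam 0) u' L'"
    by (simp del: upt_Suc add: add.commute)
  moreover have "[0..<n + 1] = 0 # 1 # [2..<n + 1]"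
    using upt_conv_Cons[of 0 "n + 1"] upt_conv_Cons[of "Suc 0" "n + 1"] assms(1)
    by (simp del: upt_Suc add: numeral_2_eq_2)
  then have "mset (complex_of_real (lam 0) # map fst L') =
      mset (map (\<lambda>j. complex_of_real (lam j)) [0..<n + 1] @ map z [1..<m + 1] @
        map (\<lambda>j. cnj (z j)) [1..<m + 1])"
    using L L' by (simp del: upt_Suc mset_map add: ac_simps comp_def)
  ultimately show ?thesis by (rule realization_of_centro_eigendata)
qed

end
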